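(* For every network $\mathcal N$ with character $D^*$, the rate region $\mathcal R^{\mathcal N}$ equals the closure of $\bigcup_{T=1}^{\infty}\frac{T}{T+D^*}\,\widetilde{\mathcal R}^{\mathcal N^T}$.
   Context: A network is a triple $\mathcal N=(\mathcal L,\mathcal I,D_{\mathcal L})$ where $\mathcal L$ is a finite nonempty set (of links); $\mathcal I=(\mathcal I(l))_{l\in\mathcal L}$ is the collision profile, each $\mathcal I(l)$ being a collection of nonempty subsets of $\mathcal L$; and $D_{\mathcal L}$ assigns an integer $D_{\mathcal L}(l,l')$ to every pair $(l,l')$ with $l'\in\phi$ for some $\phi\in\mathcal I(l)$. The character is $D^*=\max_{l\in\mathcal L}\max_{\phi\in\mathcal I(l)}\max_{l'\in\phi}|D_{\mathcal L}(l,l')|$ (0 if there are no collision sets). A schedule is a map $S:\mathcal L\times\mathbb Z\to\{0,1\}$; $S(l,t)$ has a collision if there exists $\phi\in\mathcal I(l)$ with $S(l',t+D_{\mathcal L}(l,l'))=1$ for all $l'\in\phi$, otherwise it is collision free. $R_S(l)=\lim_{T\to\infty}\frac1T\sum_{t=0}^{T-1}\iota\big(S(l,t)=1\text{ and collision free}\big)$ when the limit exists; $R_S=(R_S(l))_l$ is the rate vector when all limits exist. A nonnegative vector $R\in[0,\infty)^{\mathcal L}$ is achievable if for every $\epsilon>0$ some schedule $S$ has a rate vector with $R_S(l)\ge R(l)-\epsilon$ for all $l$; $\mathcal R^{\mathcal N}$ is the set of achievable nonnegative vectors. For an integer $T\ge1$, an independent set of $\mathcal N^T$ is a binary $|\mathcal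 L|\times T$ matrix $A$ (columns indexed $0,\dots,T-1$) such that there is no $(l,t)$ and $\phi\in\mathcal I(l)$ with $A(l,t)=1$ and, for every $l'\in\phi$, $0\le t+D_{\mathcal L}(l,l')\le T-1$ and $A(l',t+D_{\mathcal L}(l,l'))=1$. Its rate vector is $\frac1T A\mathbf 1$ (the sum of the columns divided by $T$). $\widetilde{\mathcal R}^{\mathcal N^T}$ is the convex hull of the rate vectors of all independent sets of $\mathcal N^T$. *)

theory Defs
  imports "HOL-Analysis.Analysis"
begin

text \<open>The link set L is the (finite, nonempty) universe of the type 'l.
  I l is the collection of collision sets of link l, D l l' the delay.\<close>

definition network :: "('l::finite \<Rightarrow> 'l set set) \<Rightarrow> bool" where
  "network I \<longleftrightarrow> (\<forall>l. \<forall>\<phi>\<in>I l. \<phi> \<noteq> {})"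

definition character :: "('l::finite \<Rightarrow> 'l set set) \<Rightarrow> ('l \<Rightarrow> 'l \<Rightarrow> int) \<Rightarrow> nat" where
  "character I D = nat (Max ({0} \<union> {\<bar>D l l'\<bar> | l l' \<phi>. \<phi> \<in> I l \<and> l' \<in> \<phi>}))"

definition has_collision ::
  "('l::finite \<Rightarrow> 'l set set) \<Rightarrow> ('l \<Rightarrow> 'l \<Rightarrow> int) \<Rightarrow> ('l \<Rightarrow> int \<Rightarrow> bool) \<Rightarrow> 'l \<Rightarrow> int \<Rightarrow> bool" where
  "has_collision I D S l t \<longleftrightarrow> (\<exists>\<phi>\<in>I l. \<forall>l'\<in>\<phi>. S l' (t + D l l'))"

definition avg_rate ::
  "('l::finite \<Rightarrow> 'l set set) \<Rightarrow> ('l \<Rightarrow> 'l \<Rightarrow> int) \<Rightarrow> ('l \<Rightarrow> int \<Rightarrow> bool) \<Rightarrow> 'l \<Rightarrow> nat \<Rightarrow> real" where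
  "avg_rate I D S l T =
     (\<Sum>t<T. if S l (int t) \<and> \<not> has_collision I D S l (int t) then 1 else 0) / real T"

definition achievable ::
  "('l::finite \<Rightarrow> 'l set set) \<Rightarrow> ('l \<Rightarrow> 'l \<Rightarrow> int) \<Rightarrow> real ^ 'l \<Rightarrow> bool" where
  "achievable I D R \<longleftrightarrow> (\<forall>l. 0 \<le> R $ l) \<and>
     (\<forall>\<epsilon>>0. \<exists>S. (\<forall>l. convergent (avg_rate I D S l)) \<and>
                  (\<forall>l. lim (avg_rate I D S l) \<ge> R $ l - \<epsilon>))"

definition rate_region ::
  "('l::finite \<Rightarrow> 'l set set) \<Rightarrow> ('l \<Rightarrow> 'l \<Rightarrow> int) \<Rightarrow> (real ^ 'l) set" where
  "rate_region I D = {R. achievable I D R}"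

text \<open>Independent sets of N^T: binary matrices indexed by links and columns 0..T-1
  (entries outside the columns 0..T-1 are ignored).\<close>
definition indep_set ::
  "('l::finite \<Rightarrow> 'l set set) \<Rightarrow> ('l \<Rightarrow> 'l \<Rightarrow> int) \<Rightarrow> nat \<Rightarrow> ('l \<Rightarrow> int \<Rightarrow> bool) \<Rightarrow> bool" where
  "indep_set I D T A \<longleftrightarrow>
     \<not> (\<exists>l t \<phi>. 0 \<le> t \<and> t < int T \<and> A l t \<and> \<phi> \<in> I l \<and>
          (\<forall>l'\<in>\<phi>. 0 \<le> t + D l l' \<and> t + D l l' \<le> int T - 1 \<and> A l' (t + D l l')))"

definition indep_rate :: "nat \<Rightarrow> ('l::finite \<Rightarrow> int \<Rightarrow> bool) \<Rightarrow> real ^ 'l" where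
  "indep_rate T A = (\<chi> l. (\<Sum>t\<in>{0..<int T}. if A l t then 1 else 0) / real T)"

definition indep_hull ::
  "('l::finite \<Rightarrow> 'l set set) \<Rightarrow> ('l \<Rightarrow> 'l \<Rightarrow> int) \<Rightarrow> nat \<Rightarrow> (real ^ 'l) set" where
  "indep_hull I D T = convex hull {indep_rate T A | A. indep_set I D T A}"

end

(* Write C for the character. A point of indep_hull I D T is approximated from below by an average
   of N independent sets of N^T. Playing them cyclically, each followed by C idle slots, gives a
   periodic schedule without collisions, since no delay exceeds C, and its rate vector is
   T / (T + C) times that average. As the rate region is closed, it contains the whole closure.
   Conversely, if a schedule S achieves R up to a small error, the collision-free transmissions
   of S in its first T slots form an independent set of N^T whose rate vector nearly dominates R
   for large T; since T / (T + C) tends to 1 and indep_hull I D T is closed under decreasing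
   coordinates, R is a limit of points of the scaled hulls. *)
theory Submission
  imports Defs
begin

lemma abs_delay_le_character:
  fixes I :: "'l::finite \<Rightarrow> 'l set set"
  assumes "\<phi> \<in> I l" "l' \<in> \<phi>"
  shows "\<bar>D l l'\<bar> \<le> int (character I D)"
proof -
  let ?X = "{\<bar>D l l'\<bar> | l l' \<phi>. \<phi> \<in> I l \<and> l' \<in> \<phi>}"
  have "?X \<subseteq> range (\<lambda>(l, l'). \<bar>D l l'\<bar>)" by auto
  then have fin: "finite ?X" by (rule finite_subset) simp
  have "\<bar>D l l'\<bar> \<le> Max ({0} \<union> ?X)" "0 \<le> Max ({0} \<union> ?X)"
    using fin assms by (auto intro: Max_ge)
  then show ?thesis unfolding character_def by simp
qed

lemma indep_rate_nth:
  "indep_rate T A $ l = (\<Sum>t<T. if A l (int t) then 1 else 0) / real T"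
proof -
  have "{0..<int T} = int ` {..<T}" by (simp add: image_int_atLeastLessThan lessThan_atLeast0)
  then show ?thesis by (simp add: indep_rate_def sum.reindex)
qed

lemma indep_rate_nonneg: "0 \<le> indep_rate T A $ l"
  by (simp add: indep_rate_nth sum_nonneg)

lemma indep_rate_le_one: "indep_rate T A $ l \<le> 1"
proof -
  have "(\<Sum>t<T. if A l (int t) then 1 else 0) \<le> (\<Sum>t<T. 1::real)" by (intro sum_mono) auto
  then show ?thesis by (cases "T = 0") (auto simp: indep_rate_nth divide_le_eq)
qed

lemma sum_lessThan_periodic:
  fixes f :: "nat \<Rightarrow> 'a::comm_ring_1"
  assumes per: "\<And>t. f (t + p) = f t"
  shows "(\<Sum>t<q * p + r. f t) = of_nat q * (\<Sum>t<p. f t) + (\<Sum>t<r. f t)"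
proof (induction q)
  case (Suc q)
  have "(\<Sum>t<p + (q * p + r). f t) = (\<Sum>t<p. f t) + (\<Sum>t\<in>{p..<p + (q * p + r)}. f t)"
    by (simp add: lessThan_atLeast0 sum.atLeastLessThan_concat)
  also have "(\<Sum>t\<in>{p..<p + (q * p + r)}. f t) = (\<Sum>t<q * p + r. f t)"
    using sum.shift_bounds_nat_ivl[of f 0 p "q * p + r"] per
    by (simp add: add.commute lessThan_atLeast0)
  also have "(\<Sum>t<p. f t) + (\<Sum>t<q * p + r. f t) = of_nat (Suc q) * (\<Sum>t<p. f t) + (\<Sum>t<r. f t)"
    using Suc.IH by (simp add: algebra_simps)
  finally show ?case by (simp only: mult_Suc add.assoc)
qed simp

lemma tendsto_average_periodic:
  fixes f :: "nat \<Rightarrow> real"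
  assumes p: "p > 0" and per: "\<And>t. f (t + p) = f t"
  shows "(\<lambda>n. (\<Sum>t<n. f t) / real n) \<longlonglongrightarrow> (\<Sum>t<p. f t) / real p"
proof -
  define s M where "s = (\<Sum>t<p. f t)" and "M = (\<Sum>t<p. \<bar>f t\<bar>)"
  have partial: "\<bar>\<Sum>t<r. f t\<bar> \<le> M" if "r \<le> p" for r
  proof -
    have "\<bar>\<Sum>t<r. f t\<bar> \<le> (\<Sum>t<r. \<bar>f t\<bar>)" by (rule sum_abs)
    also have "\<dots> \<le> M" unfolding M_def using that by (intro sum_mono2) auto
    finally show ?thesis .
  qed
  have bound: "\<bar>(\<Sum>t<n. f t) / real n - s / real p\<bar> \<le> 2 * M / real n" if "n \<ge> 1" for n
  proof -
    define q r where "q = n div p" and "r = n mod p"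
    have r: "r < p" unfolding r_def using p by simp
    have n: "n = q * p + r" unfolding q_def r_def by simp
    have sum_n: "(\<Sum>t<n. f t) = real q * s + (\<Sum>t<r. f t)"
      unfolding n s_def using sum_lessThan_periodic[of f p, OF per] by simp
    have pos: "real n > 0" "real p > 0" using that p by auto
    have num: "\<bar>real p * (\<Sum>t<r. f t) - real r * s\<bar> \<le> 2 * (real p * M)"
    proof -
      have "\<bar>real p * (\<Sum>t<r. f t)\<bar> \<le> real p * M" using partial[of r] r by (simp add: abs_mult)
      moreover have "\<bar>real r * s\<bar> \<le> real p * M"
      proof -
        have "\<bar>s\<bar> \<le> M" using partial[of p] unfolding s_def by simp
        then show ?thesis using r by (simp add: abs_mult mult_mono)
      qed
      ultimately show ?thesis
        using abs_triangle_ineq4[of "real p * (\<Sum>t<r. f t)" "real r * s"] by linarith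
    qed
    have "\<bar>real p * (\<Sum>t<r. f t) - real r * s\<bar> / (real n * real p) \<le> 2 * (real p * M) / (real n * real p)"
      using num pos by (intro divide_right_mono) auto
    also have "\<dots> = 2 * M / real n" using pos by simp
    finally have "\<bar>real p * (\<Sum>t<r. f t) - real r * s\<bar> / (real n * real p) \<le> 2 * M / real n" .
    moreover have "(\<Sum>t<n. f t) / real n - s / real p
        = (real p * (\<Sum>t<r. f t) - real r * s) / (real n * real p)"
      using pos unfolding sum_n by (simp add: n field_simps)
    ultimately show ?thesis using pos by (simp add: abs_divide)
  qed
  have "(\<lambda>n. (\<Sum>t<n. f t) / real n - s / real p) \<longlonglongrightarrow> 0"
  proof (rule Lim_null_comparison)
    show "\<forall>\<^sub>F n in sequentially. norm ((\<Sum>t<n. f t) / real n - s / real p) \<le> 2 * M / real n"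
      using bound by (intro eventually_sequentiallyI[of 1]) auto
  qed (rule lim_const_over_n)
  then show ?thesis unfolding s_def by (simp add: LIM_zero_iff)
qed

lemma tendsto_of_nat_over_add_const: "(\<lambda>T. real T / real (T + C)) \<longlonglongrightarrow> 1"
proof -
  have "(\<lambda>T. real C / real (T + C)) \<longlonglongrightarrow> 0"
    using LIMSEQ_ignore_initial_segment[OF lim_const_over_n[of "real C"], of C] by simp
  then have "(\<lambda>T. 1 - real C / real (T + C)) \<longlonglongrightarrow> 1 - 0" by (intro tendsto_intros)
  moreover have "\<forall>\<^sub>F T in sequentially. 1 - real C / real (T + C) = real T / real (T + C)"
    using eventually_gt_at_top[of 0] by eventually_elim (simp add: field_simps)
  ultimately show ?thesis by (simp add: Lim_transform_eventually)
qed

lemma same_period_if_mod_less: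
  fixes t d T C :: int
  assumes "0 < T" "0 \<le> C" "t mod (T + C) < T" "(t + d) mod (T + C) < T" "\<bar>d\<bar> \<le> C"
  shows "(t + d) div (T + C) = t div (T + C) \<and> (t + d) mod (T + C) = t mod (T + C) + d"
proof -
  define P q r where "P = T + C" and "q = t div P" and "r = t mod P"
  have P: "0 < P" using assms unfolding P_def by linarith
  have r: "0 \<le> r" "r < T" using assms P unfolding r_def P_def by auto
  have td: "t + d = (r + d) + q * P" unfolding q_def r_def by simp
  have "r + d < P" using r assms unfolding P_def by linarith
  moreover have "0 \<le> r + d"
  proof (rule ccontr)
    assume neg: "\<not> 0 \<le> r + d"
    have "t + d = (r + d + P) + (q - 1) * P" using td by (simp add: algebra_simps)
    moreover have "0 \<le> r + d + P" "r + d + P < P" using neg assms r unfolding P_def by linarith+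
    ultimately have "(t + d) mod P = r + d + P" by (metis mod_mult_self1 mod_pos_pos_trivial)
    then show False using assms r unfolding P_def by linarith
  qed
  ultimately show ?thesis using P unfolding td P_def[symmetric] q_def[symmetric] r_def[symmetric] by simp
qed

text \<open>The C idle slots that end each period absorb every delay, so a transmission only meets slots
  of its own period.\<close>
definition block_schedule ::
  "nat \<Rightarrow> nat \<Rightarrow> nat \<Rightarrow> (nat \<Rightarrow> 'l \<Rightarrow> int \<Rightarrow> bool) \<Rightarrow> 'l \<Rightarrow> int \<Rightarrow> bool" where
  "block_schedule T C N B l t \<longleftrightarrow>
     t mod int (T + C) < int T \<and> B (nat (t div int (T + C) mod int N)) l (t mod int (T + C))"

lemma block_schedule_collision_free:
  fixes I :: "'l::finite \<Rightarrow> 'l set set" and D :: "'l \<Rightarrow> 'l \<Rightarrow> int"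
    and B :: "nat \<Rightarrow> 'l \<Rightarrow> int \<Rightarrow> bool" and T N :: nat
  defines "S \<equiv> block_schedule T (character I D) N B"
  assumes T: "T \<ge> 1" and N: "N \<ge> 1" and indep: "\<And>j. j < N \<Longrightarrow> indep_set I D T (B j)"
    and "S l t"
  shows "\<not> has_collision I D S l t"
proof
  assume "has_collision I D S l t"
  then obtain \<phi> where \<phi>: "\<phi> \<in> I l" and hits: "\<And>l'. l' \<in> \<phi> \<Longrightarrow> S l' (t + D l l')"
    unfolding has_collision_def by blast
  define P q r where "P = int (T + character I D)" and "q = t div P" and "r = t mod P"
  define j where "j = nat (q mod int N)"
  have j: "j < N" unfolding j_def using N by (simp add: nat_less_iff)
  have r: "0 \<le> r" "r < int T" "B j l r"
    using \<open>S l t\<close> T unfolding S_def block_schedule_def P_def q_def r_def j_def by auto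
  have "0 \<le> r + D l l' \<and> r + D l l' \<le> int T - 1 \<and> B j l' (r + D l l')" if "l' \<in> \<phi>" for l'
  proof -
    have "\<bar>D l l'\<bar> \<le> int (character I D)" using abs_delay_le_character \<phi> that by blast
    moreover have "(t + D l l') mod P < int T"
      and B: "B (nat ((t + D l l') div P mod int N)) l' ((t + D l l') mod P)"
      using hits[OF that] unfolding S_def block_schedule_def P_def by auto
    ultimately have "(t + D l l') div P = q" "(t + D l l') mod P = r + D l l'"
      using same_period_if_mod_less[of "int T" "int (character I D)" t "D l l'"] r T
      unfolding P_def q_def r_def by auto
    moreover have "0 \<le> (t + D l l') mod P" using T unfolding P_def by simp
    ultimately show ?thesis using B \<open>(t + D l l') mod P < int T\<close> unfolding j_def by auto
  qed
  then show False using indep[OF j] \<phi> r unfolding indep_set_def by blast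
qed

lemma block_schedule_rate:
  fixes I :: "'l::finite \<Rightarrow> 'l set set" and D :: "'l \<Rightarrow> 'l \<Rightarrow> int"
    and B :: "nat \<Rightarrow> 'l \<Rightarrow> int \<Rightarrow> bool" and T N :: nat
  defines "S \<equiv> block_schedule T (character I D) N B"
  assumes T: "T \<ge> 1" and N: "N \<ge> 1" and indep: "\<And>j. j < N \<Longrightarrow> indep_set I D T (B j)"
  shows "avg_rate I D S l \<longlonglongrightarrow>
    real T / real (T + character I D) * ((\<Sum>j<N. indep_rate T (B j) $ l) / real N)"
proof -
  define P where "P = T + character I D"
  define f where "f t = (if S l (int t) then 1 else 0 :: real)" for t
  have avg: "avg_rate I D S l = (\<lambda>n. (\<Sum>t<n. f t) / real n)"
    using block_schedule_collision_free[OF T N indep]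
    unfolding avg_rate_def f_def S_def by (intro ext sum.cong refl arg_cong2[where f = "(/)"]) auto
  have P: "P > 0" using T unfolding P_def by simp
  have f: "f t = (if t mod P < T \<and> B (t div P mod N) l (int (t mod P)) then 1 else 0)" for t
  proof -
    have "int t div int P mod int N = int (t div P mod N)" "int t mod int P = int (t mod P)"
      by (simp_all add: zdiv_int zmod_int)
    then show ?thesis unfolding f_def S_def block_schedule_def P_def[symmetric] by simp
  qed
  have "(\<lambda>n. (\<Sum>t<n. f t) / real n) \<longlonglongrightarrow> (\<Sum>t<N * P. f t) / real (N * P)"
    using N P by (intro tendsto_average_periodic) (auto simp: f)
  moreover have "(\<Sum>t<N * P. f t) = real T * (\<Sum>j<N. indep_rate T (B j) $ l)"
  proof -
    have "(\<Sum>t\<in>{j * P..<j * P + P}. f t) = real T * indep_rate T (B j) $ l" if "j < N" for j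
    proof -
      have "(\<Sum>t\<in>{j * P..<j * P + P}. f t) = (\<Sum>t<P. f (t + j * P))"
        using sum.shift_bounds_nat_ivl[of f 0 "j * P" P] by (simp add: add.commute lessThan_atLeast0)
      also have "\<dots> = (\<Sum>t<P. if t < T \<and> B j l (int t) then 1 else 0)"
        using that by (intro sum.cong refl) (simp add: f)
      also have "\<dots> = (\<Sum>t<T. if B j l (int t) then 1 else 0)"
        unfolding P_def by (rule sum.mono_neutral_cong_right) auto
      finally show ?thesis using T by (simp add: indep_rate_nth)
    qed
    then show ?thesis by (simp add: sum.nat_group[symmetric] sum_distrib_left)
  qed
  ultimately show ?thesis unfolding avg P_def by (simp add: field_simps)
qed

lemma obtain_list_with_multiplicities:
  fixes k :: "'a \<Rightarrow> nat"
  assumes "finite F" "(\<Sum>w\<in>F. k w) \<le> N"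
  obtains L where "length L = N" "set L \<subseteq> insert z F"
    "\<And>g :: 'a \<Rightarrow> real. g z = 0 \<Longrightarrow> (\<Sum>j<N. g (L ! j)) = (\<Sum>w\<in>F. real (k w) * g w)"
proof -
  obtain ws where ws: "set ws = F" "distinct ws" using finite_distinct_list[OF assms(1)] by blast
  define L where "L = concat (map (\<lambda>w. replicate (k w) w) ws) @ replicate (N - (\<Sum>w\<in>F. k w)) z"
  have "length (concat (map (\<lambda>w. replicate (k w) w) ws)) = (\<Sum>w\<in>F. k w)"
    using ws by (simp add: length_concat comp_def sum_list_distinct_conv_sum_set)
  then have len: "length L = N" unfolding L_def using assms(2) by simp
  show thesis
  proof
    show "length L = N" by (fact len)
    show "set L \<subseteq> insert z F" unfolding L_def using ws by auto
    fix g :: "'a \<Rightarrow> real" assume "g z = 0"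
    have "(\<Sum>j<N. g (L ! j)) = sum_list (map g L)"
      using len by (simp add: sum_list_sum_nth atLeast0LessThan)
    also have "\<dots> = sum_list (map (\<lambda>w. real (k w) * g w) ws)"
      using \<open>g z = 0\<close> unfolding L_def by (induction ws) (auto simp: sum_list_replicate)
    also have "\<dots> = (\<Sum>w\<in>F. real (k w) * g w)" using ws by (simp add: sum_list_distinct_conv_sum_set)
    finally show "(\<Sum>j<N. g (L ! j)) = (\<Sum>w\<in>F. real (k w) * g w)" .
  qed
qed

lemma convex_hull_average_lower_approx:
  fixes x :: "real ^ 'n"
  assumes x: "x \<in> convex hull P" and zero: "0 \<in> P"
    and unit: "\<And>v i. v \<in> P \<Longrightarrow> 0 \<le> v $ i \<and> v $ i \<le> 1" and \<epsilon>: "\<epsilon> > 0"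
  obtains N v where "N \<ge> 1" "\<And>j. j < N \<Longrightarrow> v j \<in> P"
    "\<And>i. x $ i - \<epsilon> \<le> (\<Sum>j<N. v j $ i) / real N"
proof -
  obtain F u where F: "finite F" "F \<subseteq> P" and u: "\<forall>w\<in>F. 0 \<le> u w" "sum u F = 1"
    and x_eq: "(\<Sum>w\<in>F. u w *\<^sub>R w) = x"
    using x unfolding convex_hull_explicit by blast
  define N where "N = nat \<lceil>real (card F) / \<epsilon>\<rceil> + 1"
  have N: "N \<ge> 1" unfolding N_def by simp
  have card_small: "real (card F) / real N \<le> \<epsilon>"
  proof -
    have "real (card F) / \<epsilon> \<le> real N" unfolding N_def by linarith
    then show ?thesis using \<epsilon> N by (simp add: divide_le_eq mult.commute)
  qed
  \<comment> \<open>Round each weight u w down to k w / N, losing at most card F / N per coordinate.\<close>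
  define k where "k w = nat \<lfloor>real N * u w\<rfloor>" for w
  have k: "real N * u w - 1 \<le> real (k w)" "real (k w) \<le> real N * u w" if "w \<in> F" for w
  proof -
    have "real (k w) = of_int \<lfloor>real N * u w\<rfloor>" using u that unfolding k_def by simp
    then show "real N * u w - 1 \<le> real (k w)" "real (k w) \<le> real N * u w"
      using floor_correct[of "real N * u w"] by linarith+
  qed
  have "real (\<Sum>w\<in>F. k w) \<le> (\<Sum>w\<in>F. real N * u w)" using k by (simp add: sum_mono)
  also have "\<dots> = real N" using u by (simp add: sum_distrib_left[symmetric])
  finally obtain L where L: "length L = N" "set L \<subseteq> insert 0 F"
    and L_sum: "\<And>g :: real ^ 'n \<Rightarrow> real. g 0 = 0 \<Longrightarrow> (\<Sum>j<N. g (L ! j)) = (\<Sum>w\<in>F. real (k w) * g w)"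
    using obtain_list_with_multiplicities[OF F(1), of k N] by (metis of_nat_le_iff)
  show thesis
  proof
    show "N \<ge> 1" by (fact N)
    show "L ! j \<in> P" if "j < N" for j using that L F zero by (auto dest: nth_mem)
    show "x $ i - \<epsilon> \<le> (\<Sum>j<N. L ! j $ i) / real N" for i
    proof -
      have "real N * u w * w $ i - 1 \<le> real (k w) * w $ i" if "w \<in> F" for w
      proof -
        have "(real N * u w - 1) * w $ i \<le> real (k w) * w $ i"
          using k[OF that] unit[of w i] that F by (intro mult_right_mono) auto
        moreover have "(real N * u w - 1) * w $ i = real N * u w * w $ i - w $ i"
          by (simp add: algebra_simps)
        ultimately show ?thesis using unit[of w i] that F by auto
      qed
      then have "(\<Sum>w\<in>F. real N * u w * w $ i - 1) \<le> (\<Sum>j<N. L ! j $ i)"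
        using L_sum[of "\<lambda>w. w $ i"] by (simp add: sum_mono)
      moreover have "(\<Sum>w\<in>F. real N * u w * w $ i - 1) = real N * (x $ i - real (card F) / real N)"
        using N unfolding x_eq[symmetric]
        by (simp add: sum_subtractf sum_distrib_left mult.assoc right_diff_distrib)
      ultimately have "real N * (x $ i - real (card F) / real N) \<le> (\<Sum>j<N. L ! j $ i)"
        by linarith
      then have "x $ i - real (card F) / real N \<le> (\<Sum>j<N. L ! j $ i) / real N"
        using N by (simp add: pos_le_divide_eq mult.commute)
      then show ?thesis using card_small by linarith
    qed
  qed
qed

lemma zero_in_indep_rates: "0 \<in> {indep_rate T A | A. indep_set I D T A}"
proof -
  have "indep_set I D T (\<lambda>l t. False)" by (simp add: indep_set_def)
  moreover have "indep_rate T (\<lambda>l t. False) = 0" by (simp add: indep_rate_def vec_eq_iff)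
  ultimately show ?thesis by (intro CollectI exI[of _ "\<lambda>l t. False"]) simp
qed

lemma indep_hull_nonneg:
  assumes "x \<in> indep_hull I D T"
  shows "0 \<le> x $ i"
proof -
  have "indep_hull I D T \<subseteq> {v. \<forall>i. 0 \<le> v $ i}"
    unfolding indep_hull_def using indep_rate_nonneg
    by (intro hull_minimal) (auto simp: convex_def)
  then show ?thesis using assms by blast
qed

lemma achievable_scaled_indep_hull:
  fixes I :: "'l::finite \<Rightarrow> 'l set set"
  assumes T: "T \<ge> 1" and x: "x \<in> indep_hull I D T"
  shows "achievable I D ((real T / real (T + character I D)) *\<^sub>R x)"
proof -
  define c where "c = real T / real (T + character I D)"
  define P where "P = {indep_rate T A | A. indep_set I D T A}"
  have c: "0 < c" "c \<le> 1" using T unfolding c_def by auto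
  have unit: "0 \<le> v $ i \<and> v $ i \<le> 1" if "v \<in> P" for v i
    using that indep_rate_nonneg indep_rate_le_one unfolding P_def by blast
  show ?thesis unfolding achievable_def c_def[symmetric]
  proof (intro conjI allI impI)
    show "0 \<le> (c *\<^sub>R x) $ i" for i using indep_hull_nonneg[OF x] c by simp
    fix \<epsilon> :: real assume "\<epsilon> > 0"
    then obtain N v where N: "N \<ge> 1" and v: "\<And>j. j < N \<Longrightarrow> v j \<in> P"
      and approx: "\<And>i. x $ i - \<epsilon> \<le> (\<Sum>j<N. v j $ i) / real N"
      using convex_hull_average_lower_approx[OF _ zero_in_indep_rates unit] x
      unfolding indep_hull_def P_def by blast
    have "\<forall>j\<in>{..<N}. \<exists>A. indep_set I D T A \<and> indep_rate T A = v j"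
      using v unfolding P_def by fastforce
    then obtain B where "\<forall>j\<in>{..<N}. indep_set I D T (B j) \<and> indep_rate T (B j) = v j"
      by (rule bchoice[THEN exE])
    then have B: "\<And>j. j < N \<Longrightarrow> indep_set I D T (B j) \<and> indep_rate T (B j) = v j" by simp
    define S where "S = block_schedule T (character I D) N B"
    have lim: "avg_rate I D S i \<longlonglongrightarrow> c * ((\<Sum>j<N. v j $ i) / real N)" for i
      using block_schedule_rate[OF T N, of I D B i] B unfolding S_def c_def by simp
    show "\<exists>S. (\<forall>i. convergent (avg_rate I D S i)) \<and> (\<forall>i. (c *\<^sub>R x) $ i - \<epsilon> \<le> lim (avg_rate I D S i))"
    proof (intro exI[of _ S] conjI allI)
      show "convergent (avg_rate I D S i)" for i using lim convergentI by blast
      fix i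
      have "(c *\<^sub>R x) $ i - \<epsilon> \<le> c * (x $ i - \<epsilon>)"
        using c \<open>\<epsilon> > 0\<close> by (simp add: right_diff_distrib)
      also have "\<dots> \<le> c * ((\<Sum>j<N. v j $ i) / real N)"
        using approx c by (intro mult_left_mono) auto
      also have "\<dots> = lim (avg_rate I D S i)" using limI[OF lim] by simp
      finally show "(c *\<^sub>R x) $ i - \<epsilon> \<le> lim (avg_rate I D S i)" .
    qed
  qed
qed

lemma closed_rate_region: "closed (rate_region I D)"
  unfolding closure_subset_eq[symmetric]
proof
  fix R assume "R \<in> closure (rate_region I D)"
  then have near: "\<exists>y\<in>rate_region I D. \<forall>i. \<bar>y $ i - R $ i\<bar> < \<epsilon>" if \<epsilon>: "\<epsilon> > 0" for \<epsilon>
  proof -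
    obtain y where "y \<in> rate_region I D" "dist y R < \<epsilon>"
      using \<open>R \<in> closure (rate_region I D)\<close> \<epsilon> unfolding closure_approachable by blast
    moreover have "\<bar>y $ i - R $ i\<bar> < \<epsilon>" for i
      using dist_vec_nth_le[of y i R] \<open>dist y R < \<epsilon>\<close> unfolding dist_real_def by linarith
    ultimately show ?thesis by blast
  qed
  have "achievable I D R" unfolding achievable_def
  proof (intro conjI allI impI)
    show "0 \<le> R $ i" for i
    proof (rule ccontr)
      assume "\<not> 0 \<le> R $ i"
      then obtain y where "achievable I D y" "\<bar>y $ i - R $ i\<bar> < - R $ i"
        using near[of "- R $ i"] unfolding rate_region_def by auto
      then have "0 \<le> y $ i" "\<bar>y $ i - R $ i\<bar> < - R $ i" unfolding achievable_def by blast+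
      then show False unfolding abs_less_iff by linarith
    qed
    fix \<epsilon> :: real assume "\<epsilon> > 0"
    then obtain y where y: "achievable I D y" "\<forall>i. \<bar>y $ i - R $ i\<bar> < \<epsilon> / 2"
      using near[of "\<epsilon> / 2"] unfolding rate_region_def by auto
    then obtain S where S: "\<forall>i. convergent (avg_rate I D S i)"
      "\<forall>i. y $ i - \<epsilon> / 2 \<le> lim (avg_rate I D S i)"
      using \<open>\<epsilon> > 0\<close> unfolding achievable_def by (meson half_gt_zero)
    have "R $ i - \<epsilon> \<le> lim (avg_rate I D S i)" for i
    proof -
      have "\<bar>y $ i - R $ i\<bar> < \<epsilon> / 2" "y $ i - \<epsilon> / 2 \<le> lim (avg_rate I D S i)"
        using S(2) y(2) by blast+
      then show ?thesis unfolding abs_less_iff by linarith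
    qed
    with S(1) show "\<exists>S. (\<forall>i. convergent (avg_rate I D S i)) \<and> (\<forall>i. R $ i - \<epsilon> \<le> lim (avg_rate I D S i))"
      by blast
  qed
  then show "R \<in> rate_region I D" unfolding rate_region_def by simp
qed

lemma convex_hull_scale_component:
  fixes P :: "(real ^ 'n) set"
  assumes drop: "\<And>v. v \<in> P \<Longrightarrow> (\<chi> j. if j = i then 0 else v $ j) \<in> P"
    and w: "w \<in> convex hull P" and a: "0 \<le> a" "a \<le> 1"
  shows "(\<chi> j. if j = i then a * w $ j else w $ j) \<in> convex hull P"
proof -
  define drop_i where "drop_i v = (\<chi> j. if j = i then 0 else v $ j)" for v :: "real ^ 'n"
  have "linear drop_i" by (rule linearI) (auto simp: drop_i_def vec_eq_iff)
  then have "drop_i ` (convex hull P) = convex hull (drop_i ` P)"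
    by (rule convex_hull_linear_image)
  also have "\<dots> \<subseteq> convex hull P" using drop unfolding drop_i_def by (intro hull_mono) auto
  finally have "drop_i w \<in> convex hull P" using w by blast
  then have "a *\<^sub>R w + (1 - a) *\<^sub>R drop_i w \<in> convex hull P"
    using w a by (intro convexD[OF convex_convex_hull]) auto
  moreover have "a *\<^sub>R w + (1 - a) *\<^sub>R drop_i w = (\<chi> j. if j = i then a * w $ j else w $ j)"
    by (auto simp: vec_eq_iff drop_i_def algebra_simps)
  ultimately show ?thesis by simp
qed

lemma convex_hull_downward_closed:
  fixes P :: "(real ^ 'n) set"
  assumes drop: "\<And>v i. v \<in> P \<Longrightarrow> (\<chi> j. if j = i then 0 else v $ j) \<in> P"
    and x: "x \<in> convex hull P" and z: "\<And>i. 0 \<le> z $ i" "\<And>i. z $ i \<le> x $ i"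
  shows "z \<in> convex hull P"
proof -
  define t where "t i = (if x $ i = 0 then 0 else z $ i / x $ i)" for i
  have t: "0 \<le> t i" "t i \<le> 1" for i
    using z[of i] unfolding t_def by (auto simp: divide_le_eq_1)
  define scaled where "scaled K = (\<chi> i. if i \<in> K then t i * x $ i else x $ i)" for K
  have "scaled K \<in> convex hull P" if "finite K" for K
    using that
  proof (induction K rule: finite_induct)
    case empty
    then show ?case using x by (simp add: scaled_def)
  next
    case (insert k K)
    then have "(\<chi> j. if j = k then t k * scaled K $ j else scaled K $ j) \<in> convex hull P"
      using convex_hull_scale_component[OF drop] t by blast
    moreover have "(\<chi> j. if j = k then t k * scaled K $ j else scaled K $ j) = scaled (insert k K)"
      using insert.hyps by (auto simp: scaled_def vec_eq_iff)
    ultimately show ?case by simp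
  qed
  moreover have "t i * x $ i = z $ i" for i
    using z[of i] by (cases "x $ i = 0") (auto simp: t_def)
  then have "scaled UNIV = z" by (simp add: scaled_def vec_eq_iff)
  ultimately show ?thesis by (metis finite_class.finite_UNIV)
qed

lemma indep_set_mono:
  assumes "indep_set I D T A" "\<And>l t. A' l t \<Longrightarrow> A l t"
  shows "indep_set I D T A'"
  using assms unfolding indep_set_def by meson

lemma indep_hull_downward_closed:
  assumes "x \<in> indep_hull I D T" "\<And>i. 0 \<le> z $ i" "\<And>i. z $ i \<le> x $ i"
  shows "z \<in> indep_hull I D T"
proof -
  have "(\<chi> j. if j = l then 0 else v $ j) \<in> {indep_rate T A | A. indep_set I D T A}"
    if v: "v \<in> {indep_rate T A | A. indep_set I D T A}" for v l
  proof -
    obtain A where A: "indep_set I D T A" "v = indep_rate T A" using v by blast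
    have "indep_set I D T (\<lambda>l' t. l' \<noteq> l \<and> A l' t)" using A(1) by (rule indep_set_mono) simp
    moreover have "indep_rate T (\<lambda>l' t. l' \<noteq> l \<and> A l' t) = (\<chi> j. if j = l then 0 else v $ j)"
      unfolding A(2) by (simp add: indep_rate_def vec_eq_iff)
    ultimately show ?thesis by (intro CollectI exI[of _ "\<lambda>l' t. l' \<noteq> l \<and> A l' t"]) simp
  qed
  from this assms show ?thesis unfolding indep_hull_def by (rule convex_hull_downward_closed)
qed

definition successes ::
  "('l::finite \<Rightarrow> 'l set set) \<Rightarrow> ('l \<Rightarrow> 'l \<Rightarrow> int) \<Rightarrow> ('l \<Rightarrow> int \<Rightarrow> bool) \<Rightarrow> 'l \<Rightarrow> int \<Rightarrow> bool" where
  "successes I D S l t \<longleftrightarrow> S l t \<and> \<not> has_collision I D S l t"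

lemma indep_set_successes: "indep_set I D T (successes I D S)"
  unfolding indep_set_def
proof clarify
  fix l t \<phi> assume "successes I D S l t" "\<phi> \<in> I l"
    and "\<forall>l'\<in>\<phi>. 0 \<le> t + D l l' \<and> t + D l l' \<le> int T - 1 \<and> successes I D S l' (t + D l l')"
  then have "has_collision I D S l t" unfolding has_collision_def successes_def by blast
  then show False using \<open>successes I D S l t\<close> unfolding successes_def by blast
qed

lemma indep_rate_successes: "indep_rate T (successes I D S) $ l = avg_rate I D S l T"
  by (simp add: indep_rate_nth avg_rate_def successes_def)

lemma closure_componentwise_approachable:
  fixes x :: "real ^ 'n"
  assumes "\<And>\<delta>. \<delta> > 0 \<Longrightarrow> \<exists>y\<in>S. \<forall>i. \<bar>y $ i - x $ i\<bar> \<le> \<delta>"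
  shows "x \<in> closure S"
  unfolding closure_approachable
proof (intro allI impI)
  fix \<epsilon> :: real assume "\<epsilon> > 0"
  define \<delta> where "\<delta> = \<epsilon> / (2 * real CARD('n))"
  have "\<delta> > 0" using \<open>\<epsilon> > 0\<close> unfolding \<delta>_def by simp
  then obtain y where "y \<in> S" and y: "\<And>i. \<bar>y $ i - x $ i\<bar> \<le> \<delta>" using assms by blast
  have "dist y x \<le> (\<Sum>i\<in>UNIV. \<bar>(y - x) $ i\<bar>)" unfolding dist_norm by (rule norm_le_l1_cart)
  also have "\<dots> \<le> real CARD('n) * \<delta>" using y sum_bounded_above[of UNIV "\<lambda>i. \<bar>(y - x) $ i\<bar>" \<delta>] by simp
  also have "\<dots> < \<epsilon>" using \<open>\<epsilon> > 0\<close> unfolding \<delta>_def by simp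
  finally show "\<exists>y\<in>S. dist y x < \<epsilon>" using \<open>y \<in> S\<close> by blast
qed

lemma scaled_indep_hull_downward_closed:
  assumes x: "x \<in> indep_hull I D T" and c: "0 < c"
    and y: "\<And>i. 0 \<le> y $ i" "\<And>i. y $ i \<le> c * x $ i"
  shows "y \<in> (\<lambda>x. c *\<^sub>R x) ` indep_hull I D T"
proof
  show "y = c *\<^sub>R ((1 / c) *\<^sub>R y)" using c by simp
  show "(1 / c) *\<^sub>R y \<in> indep_hull I D T"
    using c y by (intro indep_hull_downward_closed[OF x]) (auto simp: field_simps)
qed

lemma eventually_all_gt_lim_minus:
  fixes X :: "'i::finite \<Rightarrow> nat \<Rightarrow> real"
  assumes "\<And>i. convergent (X i)" "\<delta> > 0"
  shows "\<forall>\<^sub>F n in sequentially. \<forall>i. lim (X i) - \<delta> < X i n"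
proof (rule eventually_all_finite)
  fix i
  have "X i \<longlonglongrightarrow> lim (X i)" using assms(1) convergent_LIMSEQ_iff by blast
  from order_tendstoD(1)[OF this] assms(2)
  show "\<forall>\<^sub>F n in sequentially. lim (X i) - \<delta> < X i n" by simp
qed

lemma achievable_in_closure_scaled_indep_hull:
  fixes I :: "'l::finite \<Rightarrow> 'l set set"
  assumes R: "achievable I D R"
  shows "R \<in> closure (\<Union>T\<in>{1..}. (\<lambda>x. (real T / real (T + character I D)) *\<^sub>R x) ` indep_hull I D T)"
proof (rule closure_componentwise_approachable)
  fix \<delta> :: real assume "\<delta> > 0"
  define c where "c T = real T / real (T + character I D)" for T
  have R_nonneg: "0 \<le> R $ l" for l using R unfolding achievable_def by blast
  obtain S where S_conv: "\<forall>l. convergent (avg_rate I D S l)"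
    and S_lim: "\<forall>l. R $ l - \<delta> / 3 \<le> lim (avg_rate I D S l)"
    using R \<open>\<delta> > 0\<close> unfolding achievable_def by (meson divide_pos_pos zero_less_numeral)
  have "\<forall>\<^sub>F T in sequentially. \<forall>l. R $ l - \<delta> / 3 < c T * R $ l"
  proof (rule eventually_all_finite)
    fix l
    have "(\<lambda>T. c T * R $ l) \<longlonglongrightarrow> 1 * R $ l"
      unfolding c_def by (intro tendsto_intros tendsto_of_nat_over_add_const)
    from order_tendstoD(1)[OF this] \<open>\<delta> > 0\<close>
    show "\<forall>\<^sub>F T in sequentially. R $ l - \<delta> / 3 < c T * R $ l" by simp
  qed
  moreover have "\<forall>\<^sub>F T in sequentially. \<forall>l. lim (avg_rate I D S l) - \<delta> / 3 < avg_rate I D S l T"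
    using S_conv \<open>\<delta> > 0\<close> by (intro eventually_all_gt_lim_minus) auto
  ultimately have "\<forall>\<^sub>F T in sequentially. T \<ge> 1 \<and>
      (\<forall>l. lim (avg_rate I D S l) - \<delta> / 3 < avg_rate I D S l T) \<and> (\<forall>l. R $ l - \<delta> / 3 < c T * R $ l)"
    using eventually_ge_at_top[of 1] by (intro eventually_conj)
  then obtain T where T: "T \<ge> 1"
    and avg: "\<forall>l. lim (avg_rate I D S l) - \<delta> / 3 < avg_rate I D S l T"
    and cR: "\<forall>l. R $ l - \<delta> / 3 < c T * R $ l"
    unfolding eventually_sequentially by blast
  have c: "0 < c T" "c T \<le> 1" using T unfolding c_def by auto
  define x where "x = indep_rate T (successes I D S)"
  have x: "x \<in> indep_hull I D T" unfolding x_def indep_hull_def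
    using indep_set_successes by (blast intro: hull_inc)
  define y where "y = (\<chi> l. min (R $ l) (c T * x $ l))"
  have "y \<in> (\<lambda>x. c T *\<^sub>R x) ` indep_hull I D T"
    using x c R_nonneg indep_rate_nonneg[of T "successes I D S"]
    by (intro scaled_indep_hull_downward_closed) (auto simp: y_def x_def)
  moreover have "\<bar>y $ l - R $ l\<bar> \<le> \<delta>" for l
  proof -
    have "c T * (2 * \<delta> / 3) \<le> 2 * \<delta> / 3" using c \<open>\<delta> > 0\<close> by simp
    then have "R $ l - \<delta> \<le> c T * (R $ l - 2 * \<delta> / 3)"
      using cR[rule_format, of l] unfolding right_diff_distrib by linarith
    also have "\<dots> \<le> c T * x $ l"
    proof (rule mult_left_mono)
      show "R $ l - 2 * \<delta> / 3 \<le> x $ l"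
        using avg[rule_format, of l] S_lim[rule_format, of l]
        unfolding x_def indep_rate_successes by linarith
    qed (use c in simp)
    finally show ?thesis unfolding y_def using \<open>\<delta> > 0\<close> by auto
  qed
  ultimately show "\<exists>y\<in>\<Union>T\<in>{1..}. (\<lambda>x. c T *\<^sub>R x) ` indep_hull I D T. \<forall>l. \<bar>y $ l - R $ l\<bar> \<le> \<delta>"
    using T by blast
qed

theorem theorem2:
  fixes I :: "'l::finite \<Rightarrow> 'l set set" and D :: "'l \<Rightarrow> 'l \<Rightarrow> int"
  assumes "network I"
  shows "rate_region I D =
    closure (\<Union>T\<in>{1..}. (\<lambda>x. (real T / real (T + character I D)) *\<^sub>R x) ` indep_hull I D T)"
proof
  show "rate_region I D \<subseteq>
      closure (\<Union>T\<in>{1..}. (\<lambda>x. (real T / real (T + character I D)) *\<^sub>R x) ` indep_hull I D T)"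
    using achievable_in_closure_scaled_indep_hull unfolding rate_region_def by blast
  show "closure (\<Union>T\<in>{1..}. (\<lambda>x. (real T / real (T + character I D)) *\<^sub>R x) ` indep_hull I D T)
      \<subseteq> rate_region I D"
    using achievable_scaled_indep_hull closed_rate_region
    by (intro closure_minimal) (auto simp: rate_region_def)
qed

end
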